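(* Let $\rho_{AB}$ be a two-qubit density operator and $\Phi_{AB}=|\Phi\rangle\langle\Phi|$ a pure maximally entangled two-qubit state. If $\langle\Phi|\rho_{AB}|\Phi\rangle\ge c$ for some $c\in[\frac12,1]$, then the spectrum of the reduced state $\rho_A=\operatorname{tr}_B\rho_{AB}$ is contained in $\big[\frac{1-\eta}{2},\frac{1+\eta}{2}\big]$, where $\eta:=2\sqrt{c(1-c)}$. *)

theory Defs
  imports Complex_Main "Jordan_Normal_Form.Matrix" "Jordan_Normal_Form.Char_Poly"
begin

text \<open>Two-qubit Hilbert space C^2 (x) C^2 is identified with C^4, the basis vector
  |a>|b> (a, b in {0,1}) having index 2*a + b.\<close>

definition hermitian_mat :: "complex mat \<Rightarrow> bool" where
  "hermitian_mat A \<longleftrightarrow> (\<forall>i<dim_row A. \<forall>j<dim_row A. A $$ (i,j) = cnj (A $$ (j,i)))"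

definition psd_mat :: "complex mat \<Rightarrow> bool" where
  "psd_mat A \<longleftrightarrow> (\<forall>v \<in> carrier_vec (dim_row A).
      Im (conjugate v \<bullet> (A *\<^sub>v v)) = 0 \<and> Re (conjugate v \<bullet> (A *\<^sub>v v)) \<ge> 0)"

definition mat_trace :: "complex mat \<Rightarrow> complex" where
  "mat_trace A = (\<Sum>i<dim_row A. A $$ (i,i))"

definition density_operator :: "nat \<Rightarrow> complex mat \<Rightarrow> bool" where
  "density_operator n \<rho> \<longleftrightarrow> \<rho> \<in> carrier_mat n n \<and> hermitian_mat \<rho> \<and> psd_mat \<rho> \<and> mat_trace \<rho> = 1"

definition ptrace_B :: "complex mat \<Rightarrow> complex mat" where
  "ptrace_B \<rho> = mat 2 2 (\<lambda>(a, a'). \<Sum>b<2. \<rho> $$ (2*a + b, 2*a' + b))"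

definition tensor_vec2 :: "complex vec \<Rightarrow> complex vec \<Rightarrow> complex vec" where
  "tensor_vec2 u w = vec 4 (\<lambda>i. u $ (i div 2) * w $ (i mod 2))"

definition orthonormal_basis2 :: "complex vec \<Rightarrow> complex vec \<Rightarrow> bool" where
  "orthonormal_basis2 e0 e1 \<longleftrightarrow> e0 \<in> carrier_vec 2 \<and> e1 \<in> carrier_vec 2 \<and>
     e0 \<bullet>c e0 = 1 \<and> e1 \<bullet>c e1 = 1 \<and> e0 \<bullet>c e1 = 0"

definition max_entangled2 :: "complex vec \<Rightarrow> bool" where
  "max_entangled2 \<Phi> \<longleftrightarrow> (\<exists>e0 e1 f0 f1. orthonormal_basis2 e0 e1 \<and> orthonormal_basis2 f0 f1 \<and>
     \<Phi> = complex_of_real (1 / sqrt 2) \<cdot>\<^sub>v (tensor_vec2 e0 f0 + tensor_vec2 e1 f1))"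

definition expect :: "complex vec \<Rightarrow> complex mat \<Rightarrow> complex" where
  "expect \<Phi> \<rho> = conjugate \<Phi> \<bullet> (\<rho> *\<^sub>v \<Phi>)"

end

(*
  Let u be a unit eigenvector of the reduced state \<rho>_A for the eigenvalue \<lambda>, and u\<^sup>\<perp> its
  orthogonal complement. The projections P = |u\<rangle>\<langle>u| \<otimes> I and Q = |u\<^sup>\<perp>\<rangle>\<langle>u\<^sup>\<perp>| \<otimes> I satisfy
  tr(\<rho> P) = \<lambda> and tr(\<rho> Q) = 1 - \<lambda>, and because \<Phi> is maximally entangled, P\<Phi> and Q\<Phi> both have
  squared norm 1/2. As P\<Phi> lies in the span of |u\<rangle>|0\<rangle> and |u\<rangle>|1\<rangle>, positivity of \<rho> gives
  \<langle>P\<Phi>|\<rho>|P\<Phi>\<rangle> \<le> \<lambda>/2, and likewise \<langle>Q\<Phi>|\<rho>|Q\<Phi>\<rangle> \<le> (1 - \<lambda>)/2. Expanding \<Phi> = P\<Phi> + Q\<Phi> and bounding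
  the cross term by Cauchy-Schwarz yields c \<le> \<langle>\<Phi>|\<rho>|\<Phi>\<rangle> \<le> 1/2 + sqrt(\<lambda>(1 - \<lambda>)), which rearranges
  to |\<lambda> - 1/2| \<le> sqrt(c(1 - c)).
*)

theory Submission
  imports Defs
begin

definition sesq_form :: "complex mat \<Rightarrow> (nat \<Rightarrow> complex) \<Rightarrow> (nat \<Rightarrow> complex) \<Rightarrow> complex" where
  "sesq_form R x y = (\<Sum>i<dim_row R. \<Sum>j<dim_row R. cnj (x i) * R $$ (i, j) * y j)"

lemma sesq_form_vec:
  assumes "R \<in> carrier_mat n n" "v \<in> carrier_vec n"
  shows "conjugate v \<bullet> (R *\<^sub>v v) = sesq_form R (($) v) (($) v)"
  using assms unfolding sesq_form_def scalar_prod_def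
  by (simp add: sum_distrib_left mult.assoc atLeast0LessThan row_def scalar_prod_def)

lemma sesq_form_cong:
  assumes "\<And>i. i < dim_row R \<Longrightarrow> x i = x' i" "\<And>i. i < dim_row R \<Longrightarrow> y i = y' i"
  shows "sesq_form R x y = sesq_form R x' y'"
  unfolding sesq_form_def using assms by (intro sum.cong refl) auto

lemma sesq_form_combination:
  "sesq_form R (\<lambda>i. a * x i + b * y i) (\<lambda>i. a * x i + b * y i) =
    cnj a * a * sesq_form R x x + cnj a * b * sesq_form R x y
    + cnj b * a * sesq_form R y x + cnj b * b * sesq_form R y y"
  unfolding sesq_form_def by (simp add: algebra_simps sum.distrib sum_distrib_left)

lemma psd_sesq_form:
  assumes "psd_mat R" "R \<in> carrier_mat n n"
  shows psd_sesq_form_real: "sesq_form R x x = of_real (Re (sesq_form R x x))"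
    and psd_sesq_form_nonneg: "Re (sesq_form R x x) \<ge> 0"
proof -
  have v: "vec n x \<in> carrier_vec (dim_row R)" using assms(2) by simp
  have "sesq_form R x x = sesq_form R (($) (vec n x)) (($) (vec n x))"
    using assms(2) by (intro sesq_form_cong) simp_all
  also have "\<dots> = conjugate (vec n x) \<bullet> (R *\<^sub>v vec n x)"
    using sesq_form_vec[OF assms(2)] by simp
  finally have "Im (sesq_form R x x) = 0" "Re (sesq_form R x x) \<ge> 0"
    using assms(1) v unfolding psd_mat_def by metis+
  then show "sesq_form R x x = of_real (Re (sesq_form R x x))" "Re (sesq_form R x x) \<ge> 0"
    by (simp_all add: complex_eq_iff)
qed

lemma hermitian_sesq_form_swap:
  assumes "hermitian_mat R"
  shows "sesq_form R y x = cnj (sesq_form R x y)"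
proof -
  have "sesq_form R y x = (\<Sum>j<dim_row R. \<Sum>i<dim_row R. cnj (y i) * R $$ (i, j) * x j)"
    unfolding sesq_form_def by (rule sum.swap)
  also have "\<dots> = (\<Sum>j<dim_row R. \<Sum>i<dim_row R. cnj (cnj (x j) * R $$ (j, i) * y i))"
  proof (intro sum.cong refl)
    fix i j assume "i \<in> {..<dim_row R}" "j \<in> {..<dim_row R}"
    then have "R $$ (i, j) = cnj (R $$ (j, i))"
      using assms unfolding hermitian_mat_def by blast
    then show "cnj (y i) * R $$ (i, j) * x j = cnj (cnj (x j) * R $$ (j, i) * y i)"
      by simp
  qed
  also have "\<dots> = cnj (sesq_form R x y)"
    unfolding sesq_form_def cnj_sum ..
  finally show ?thesis .
qed

lemma nonneg_quadratic_bound: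
  fixes \<alpha> \<beta> g :: real
  assumes nonneg: "\<And>t. 0 \<le> \<alpha> * t\<^sup>2 - 2 * g * t + \<beta> * g"
    and "0 \<le> \<alpha>" "0 \<le> \<beta>" "0 \<le> g"
  shows "g \<le> \<alpha> * \<beta>"
proof (cases "\<alpha> = 0")
  case True
  have "0 \<le> - 2 * g * ((\<beta> + 1) / 2) + \<beta> * g"
    using nonneg[of "(\<beta> + 1) / 2"] True by simp
  also have "- 2 * g * ((\<beta> + 1) / 2) + \<beta> * g = - g" by (simp add: field_simps)
  finally have "g \<le> 0" by simp
  then show ?thesis using mult_nonneg_nonneg[OF assms(2,3)] by linarith
next
  case False
  with assms(2) have "\<alpha> > 0" by simp
  have "0 \<le> \<alpha> * (g / \<alpha>)\<^sup>2 - 2 * g * (g / \<alpha>) + \<beta> * g"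
    by (rule nonneg)
  also have "\<dots> = g * (\<alpha> * \<beta> - g) / \<alpha>"
    using \<open>\<alpha> > 0\<close> by (simp add: field_simps power2_eq_square)
  finally have "0 \<le> g * (\<alpha> * \<beta> - g)"
    using \<open>\<alpha> > 0\<close> by (simp add: zero_le_divide_iff)
  show ?thesis
  proof (cases "g = 0")
    case True
    then show ?thesis using assms(2,3) by simp
  next
    case False
    with assms(4) have "g > 0" by simp
    with \<open>0 \<le> g * (\<alpha> * \<beta> - g)\<close> show ?thesis
      using zero_le_mult_iff[of g "\<alpha> * \<beta> - g"] by linarith
  qed
qed

lemma psd_sesq_form_Cauchy_Schwarz:
  assumes psd: "psd_mat R" and herm: "hermitian_mat R" and R: "R \<in> carrier_mat n n"
  shows "cmod (sesq_form R x y)^2 \<le> Re (sesq_form R x x) * Re (sesq_form R y y)"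
proof (rule nonneg_quadratic_bound)
  define \<alpha> where "\<alpha> = Re (sesq_form R x x)"
  define \<beta> where "\<beta> = Re (sesq_form R y y)"
  define \<gamma> where "\<gamma> = sesq_form R x y"
  have xx: "sesq_form R x x = of_real \<alpha>" and yy: "sesq_form R y y = of_real \<beta>"
    unfolding \<alpha>_def \<beta>_def using psd_sesq_form_real[OF psd R] by blast+
  have yx: "sesq_form R y x = cnj \<gamma>"
    unfolding \<gamma>_def by (rule hermitian_sesq_form_swap[OF herm])
  fix t :: real
  let ?v = "\<lambda>i. of_real t * x i + - cnj \<gamma> * y i"
  have "sesq_form R ?v ?v = of_real (\<alpha> * t\<^sup>2 - 2 * cmod \<gamma>^2 * t + \<beta> * cmod \<gamma>^2)"
    unfolding sesq_form_combination xx yy yx \<gamma>_def[symmetric]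
    by (simp only: of_real_add of_real_diff of_real_mult complex_norm_square)
      (simp add: algebra_simps power2_eq_square)
  then show "0 \<le> \<alpha> * t\<^sup>2 - 2 * cmod \<gamma>^2 * t + \<beta> * cmod \<gamma>^2"
    using psd_sesq_form_nonneg[OF psd R, of ?v] by simp
qed (use psd_sesq_form_nonneg[OF psd R] in auto)

lemma psd_sesq_form_combination_le:
  assumes psd: "psd_mat R" and herm: "hermitian_mat R" and R: "R \<in> carrier_mat n n"
  shows "Re (sesq_form R (\<lambda>i. w0 * p i + w1 * q i) (\<lambda>i. w0 * p i + w1 * q i))
     \<le> (Re (sesq_form R p p) + Re (sesq_form R q q)) * (cmod w0^2 + cmod w1^2)"
proof -
  define m0 where "m0 = Re (sesq_form R p p)"
  define m1 where "m1 = Re (sesq_form R q q)"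
  define \<gamma> where "\<gamma> = sesq_form R p q"
  have pp: "sesq_form R p p = of_real m0" and qq: "sesq_form R q q = of_real m1"
    unfolding m0_def m1_def using psd_sesq_form_real[OF psd R] by blast+
  have qp: "sesq_form R q p = cnj \<gamma>"
    unfolding \<gamma>_def by (rule hermitian_sesq_form_swap[OF herm])
  have m: "0 \<le> m0" "0 \<le> m1"
    unfolding m0_def m1_def using psd_sesq_form_nonneg[OF psd R] by blast+
  have \<gamma>: "cmod \<gamma> \<le> sqrt (m0 * m1)"
    using psd_sesq_form_Cauchy_Schwarz[OF psd herm R, of p q]
    unfolding \<gamma>_def m0_def m1_def by (simp add: real_le_rsqrt)
  have w0: "cnj w0 * w0 = of_real (cmod w0^2)" and w1: "cnj w1 * w1 = of_real (cmod w1^2)"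
    by (metis complex_norm_square mult.commute)+
  have "sesq_form R (\<lambda>i. w0 * p i + w1 * q i) (\<lambda>i. w0 * p i + w1 * q i)
      = of_real (m0 * cmod w0^2 + m1 * cmod w1^2) + (cnj w0 * w1 * \<gamma> + cnj (cnj w0 * w1 * \<gamma>))"
    unfolding sesq_form_combination pp qq qp \<gamma>_def[symmetric] using w0 w1
    by (simp add: algebra_simps)
  also have "\<dots> = of_real (m0 * cmod w0^2 + m1 * cmod w1^2 + 2 * Re (cnj w0 * w1 * \<gamma>))"
    by (simp only: complex_add_cnj of_real_add)
  finally have "Re (sesq_form R (\<lambda>i. w0 * p i + w1 * q i) (\<lambda>i. w0 * p i + w1 * q i))
      = m0 * cmod w0^2 + m1 * cmod w1^2 + 2 * Re (cnj w0 * w1 * \<gamma>)"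
    by simp
  also have "\<dots> \<le> m0 * cmod w0^2 + m1 * cmod w1^2 + 2 * (cmod w0 * cmod w1 * sqrt (m0 * m1))"
  proof -
    have "Re (cnj w0 * w1 * \<gamma>) \<le> cmod (cnj w0 * w1 * \<gamma>)"
      by (rule complex_Re_le_cmod)
    also have "\<dots> \<le> cmod w0 * cmod w1 * sqrt (m0 * m1)"
      using \<gamma> by (simp add: norm_mult mult_left_mono)
    finally show ?thesis by simp
  qed
  also have "\<dots> \<le> (m0 + m1) * (cmod w0^2 + cmod w1^2)"
  proof -
    have "0 \<le> (cmod w1 * sqrt m0 - cmod w0 * sqrt m1)\<^sup>2" by simp
    also have "\<dots> = m0 * cmod w1^2 + m1 * cmod w0^2 - 2 * (cmod w0 * cmod w1 * sqrt (m0 * m1))"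
      using m by (simp add: power2_diff power_mult_distrib real_sqrt_mult algebra_simps)
    finally show ?thesis by (simp add: distrib_left distrib_right)
  qed
  finally show ?thesis unfolding m0_def m1_def .
qed

lemma norm2_sum_eq_iff: "cmod p ^ 2 + cmod q ^ 2 = r \<longleftrightarrow> p * cnj p + q * cnj q = of_real r"
proof -
  have "complex_of_real (cmod p ^ 2 + cmod q ^ 2) = p * cnj p + q * cnj q"
    by (simp only: of_real_add complex_norm_square)
  then show ?thesis by (metis of_real_eq_iff)
qed

lemma unitary2_columns:
  fixes a b c d :: complex
  assumes ab: "a * cnj a + b * cnj b = 1" and cd: "c * cnj c + d * cnj d = 1"
    and ac: "a * cnj c + b * cnj d = 0"
  shows "a * cnj a + c * cnj c = 1" "b * cnj b + d * cnj d = 1" "a * cnj b + c * cnj d = 0"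
proof -
  have bb: "b * cnj b = 1 - a * cnj a" and dd: "d * cnj d = 1 - c * cnj c"
    using ab cd by (simp_all add: eq_diff_eq add.commute)
  have "cnj a * c + cnj b * d = 0"
    using arg_cong[OF ac, of cnj] by (simp add: mult.commute)
  then have bd: "b * cnj d = - (a * cnj c)" and db: "cnj b * d = - (cnj a * c)"
    using ac by (simp_all add: eq_neg_iff_add_eq_0 add.commute)
  have "(a * cnj a) * (c * cnj c) = (b * cnj d) * (cnj b * d)"
    unfolding bd db by (simp add: ac_simps)
  also have "\<dots> = (1 - a * cnj a) * (1 - c * cnj c)"
    by (simp add: ac_simps flip: bb dd)
  finally show col0: "a * cnj a + c * cnj c = 1" by (simp add: algebra_simps)
  then show col1: "b * cnj b + d * cnj d = 1"
    unfolding bb dd by (simp add: algebra_simps)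
  define T where "T = a * cnj b + c * cnj d"
  have "T * b = a * (b * cnj b) + c * (b * cnj d)" "T * d = a * (cnj b * d) + c * (d * cnj d)"
    unfolding T_def by (simp_all add: algebra_simps)
  then have "T * b = a * (1 - (a * cnj a + c * cnj c))" "T * d = c * (1 - (a * cnj a + c * cnj c))"
    unfolding bb dd bd db by (simp_all add: algebra_simps)
  then have Tb: "T * b = 0" and Td: "T * d = 0" using col0 by simp_all
  have "T = T * (b * cnj b + d * cnj d)" using col1 by simp
  also have "\<dots> = (T * b) * cnj b + (T * d) * cnj d" by (simp add: algebra_simps)
  finally have "T = 0" using Tb Td by simp
  then show "a * cnj b + c * cnj d = 0" unfolding T_def .
qed

lemma unitary2_isometry:
  fixes a b c d s0 s1 :: complex
  assumes "a * cnj a + b * cnj b = 1" "c * cnj c + d * cnj d = 1" "a * cnj c + b * cnj d = 0"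
  shows "(s0 * a + s1 * c) * cnj (s0 * a + s1 * c) + (s0 * b + s1 * d) * cnj (s0 * b + s1 * d)
    = s0 * cnj s0 + s1 * cnj s1"
proof -
  have ca: "cnj a * c + cnj b * d = 0"
    using arg_cong[OF assms(3), of cnj] by (simp add: mult.commute)
  have "(s0 * a + s1 * c) * cnj (s0 * a + s1 * c) + (s0 * b + s1 * d) * cnj (s0 * b + s1 * d)
    = s0 * cnj s0 * (a * cnj a + b * cnj b) + s1 * cnj s1 * (c * cnj c + d * cnj d)
      + s0 * cnj s1 * (a * cnj c + b * cnj d) + s1 * cnj s0 * (cnj a * c + cnj b * d)"
    by (simp add: algebra_simps)
  then show ?thesis
    unfolding assms ca by simp
qed

lemma orthonormal_basis2_coords:
  assumes "orthonormal_basis2 e0 e1"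
  shows "e0$0 * cnj (e0$0) + e0$1 * cnj (e0$1) = 1" "e1$0 * cnj (e1$0) + e1$1 * cnj (e1$1) = 1"
    "e0$0 * cnj (e1$0) + e0$1 * cnj (e1$1) = 0"
  using assms unfolding orthonormal_basis2_def scalar_prod_def
  by (auto simp: numeral_eq_Suc atLeast0LessThan lessThan_Suc add.commute)

text \<open>For a qubit vector \<open>u = (u0, u1)\<close>: \<open>tensor_ket u0 u1 b\<close> is \<open>|u\<rangle> \<otimes> |b\<rangle>\<close> (for \<open>b < 2\<close>),
  \<open>partial_bra u0 u1 x\<close> is \<open>(\<langle>u| \<otimes> I) x\<close>, \<open>partial_proj u0 u1 x\<close> is \<open>(|u\<rangle>\<langle>u| \<otimes> I) x\<close>, and
  \<open>local_weight \<rho> u0 u1\<close> is \<open>tr (\<rho> (|u\<rangle>\<langle>u| \<otimes> I)) = \<langle>u| \<rho>\<^sub>A |u\<rangle>\<close>.\<close>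
definition tensor_ket :: "complex \<Rightarrow> complex \<Rightarrow> nat \<Rightarrow> nat \<Rightarrow> complex" where
  "tensor_ket u0 u1 b i = (if i = b then u0 else if i = 2 + b then u1 else 0)"

definition partial_bra :: "complex \<Rightarrow> complex \<Rightarrow> (nat \<Rightarrow> complex) \<Rightarrow> nat \<Rightarrow> complex" where
  "partial_bra u0 u1 x b = cnj u0 * x b + cnj u1 * x (2 + b)"

definition partial_proj :: "complex \<Rightarrow> complex \<Rightarrow> (nat \<Rightarrow> complex) \<Rightarrow> nat \<Rightarrow> complex" where
  "partial_proj u0 u1 x i =
     partial_bra u0 u1 x 0 * tensor_ket u0 u1 0 i + partial_bra u0 u1 x 1 * tensor_ket u0 u1 1 i"

definition local_weight :: "complex mat \<Rightarrow> complex \<Rightarrow> complex \<Rightarrow> complex" where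
  "local_weight \<rho> u0 u1 =
     sesq_form \<rho> (tensor_ket u0 u1 0) (tensor_ket u0 u1 0)
     + sesq_form \<rho> (tensor_ket u0 u1 1) (tensor_ket u0 u1 1)"

lemma partial_proj_resolution:
  assumes "cmod u0 ^ 2 + cmod u1 ^ 2 = 1" "i < 4"
  shows "x i = partial_proj u0 u1 x i + partial_proj (- cnj u1) (cnj u0) x i"
proof -
  have u: "u0 * cnj u0 + u1 * cnj u1 = 1"
    using assms(1) by (simp add: norm2_sum_eq_iff)
  have "i = 0 \<or> i = 1 \<or> i = 2 \<or> i = 3" using assms(2) by auto
  then have "partial_proj u0 u1 x i + partial_proj (- cnj u1) (cnj u0) x i
      = x i * (u0 * cnj u0 + u1 * cnj u1)"
    unfolding partial_proj_def partial_bra_def tensor_ket_def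
    by (elim disjE) (simp_all add: algebra_simps numeral_2_eq_2 numeral_3_eq_3)
  then show ?thesis unfolding u by simp
qed

lemma max_entangled2_carrier_vec: "max_entangled2 \<Phi> \<Longrightarrow> \<Phi> \<in> carrier_vec 4"
  unfolding max_entangled2_def tensor_vec2_def by auto

lemma max_entangled2_partial_bra:
  assumes "max_entangled2 \<Phi>" and u: "cmod u0 ^ 2 + cmod u1 ^ 2 = 1"
  shows "cmod (partial_bra u0 u1 (($) \<Phi>) 0) ^ 2 + cmod (partial_bra u0 u1 (($) \<Phi>) 1) ^ 2 = 1 / 2"
proof -
  obtain e0 e1 f0 f1 where e: "orthonormal_basis2 e0 e1" and f: "orthonormal_basis2 f0 f1"
    and \<Phi>: "\<Phi> = complex_of_real (1 / sqrt 2) \<cdot>\<^sub>v (tensor_vec2 e0 f0 + tensor_vec2 e1 f1)"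
    using assms(1) unfolding max_entangled2_def by blast
  define k where "k = complex_of_real (1 / sqrt 2)"
  define s0 where "s0 = cnj u0 * e0$0 + cnj u1 * e0$1"
  define s1 where "s1 = cnj u0 * e1$0 + cnj u1 * e1$1"
  have bra: "partial_bra u0 u1 (($) \<Phi>) 0 = k * (s0 * f0$0 + s1 * f1$0)"
    "partial_bra u0 u1 (($) \<Phi>) 1 = k * (s0 * f0$1 + s1 * f1$1)"
    unfolding \<Phi> tensor_vec2_def partial_bra_def s0_def s1_def k_def
    by (simp_all add: algebra_simps)
  have kk: "k * cnj k = 1 / 2"
    unfolding k_def by (simp flip: of_real_mult add: power_divide)
  have "s0 * cnj s0 + s1 * cnj s1 = cnj u0 * cnj (cnj u0) + cnj u1 * cnj (cnj u1)"
    unfolding s0_def s1_def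
    by (rule unitary2_isometry[OF unitary2_columns[OF orthonormal_basis2_coords[OF e]]])
  also have "\<dots> = 1"
    using u by (simp add: norm2_sum_eq_iff mult.commute)
  finally have s: "s0 * cnj s0 + s1 * cnj s1 = 1" .
  have "k * (s0 * f0$0 + s1 * f1$0) * cnj (k * (s0 * f0$0 + s1 * f1$0))
      + k * (s0 * f0$1 + s1 * f1$1) * cnj (k * (s0 * f0$1 + s1 * f1$1))
      = (k * cnj k) * ((s0 * f0$0 + s1 * f1$0) * cnj (s0 * f0$0 + s1 * f1$0)
          + (s0 * f0$1 + s1 * f1$1) * cnj (s0 * f0$1 + s1 * f1$1))"
    by (simp add: algebra_simps)
  also have "\<dots> = 1 / 2"
    unfolding kk unitary2_isometry[OF orthonormal_basis2_coords[OF f]] s by simp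
  finally show ?thesis
    unfolding norm2_sum_eq_iff bra by simp
qed

lemma local_weight_ptrace_B:
  assumes "\<rho> \<in> carrier_mat 4 4"
  shows "local_weight \<rho> u0 u1 =
    cnj u0 * (ptrace_B \<rho> $$ (0, 0) * u0 + ptrace_B \<rho> $$ (0, 1) * u1)
    + cnj u1 * (ptrace_B \<rho> $$ (1, 0) * u0 + ptrace_B \<rho> $$ (1, 1) * u1)"
  using assms
  by (simp add: local_weight_def sesq_form_def ptrace_B_def tensor_ket_def
      numeral_eq_Suc lessThan_Suc algebra_simps)

lemma local_weight_complement:
  assumes "\<rho> \<in> carrier_mat 4 4" "cmod u0 ^ 2 + cmod u1 ^ 2 = 1"
  shows "local_weight \<rho> u0 u1 + local_weight \<rho> (- cnj u1) (cnj u0) = mat_trace \<rho>"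
proof -
  have "u0 * cnj u0 + u1 * cnj u1 = 1"
    using assms(2) by (simp add: norm2_sum_eq_iff)
  moreover have "local_weight \<rho> u0 u1 + local_weight \<rho> (- cnj u1) (cnj u0)
      = mat_trace \<rho> * (u0 * cnj u0 + u1 * cnj u1)"
    using assms(1)
    by (simp add: local_weight_def sesq_form_def mat_trace_def tensor_ket_def
        numeral_eq_Suc lessThan_Suc algebra_simps)
  ultimately show ?thesis by simp
qed

lemma partial_proj_sesq_form_le:
  assumes psd: "psd_mat \<rho>" and herm: "hermitian_mat \<rho>" and \<rho>: "\<rho> \<in> carrier_mat 4 4"
    and \<Phi>: "max_entangled2 \<Phi>" and u: "cmod u0 ^ 2 + cmod u1 ^ 2 = 1"
  shows "Re (sesq_form \<rho> (partial_proj u0 u1 (($) \<Phi>)) (partial_proj u0 u1 (($) \<Phi>)))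
    \<le> Re (local_weight \<rho> u0 u1) / 2"
proof -
  have "partial_proj u0 u1 (($) \<Phi>) = (\<lambda>i. partial_bra u0 u1 (($) \<Phi>) 0 * tensor_ket u0 u1 0 i
      + partial_bra u0 u1 (($) \<Phi>) 1 * tensor_ket u0 u1 1 i)"
    by (rule ext) (simp only: partial_proj_def)
  then have "Re (sesq_form \<rho> (partial_proj u0 u1 (($) \<Phi>)) (partial_proj u0 u1 (($) \<Phi>)))
    \<le> Re (local_weight \<rho> u0 u1)
      * (cmod (partial_bra u0 u1 (($) \<Phi>) 0) ^ 2 + cmod (partial_bra u0 u1 (($) \<Phi>) 1) ^ 2)"
    unfolding local_weight_def plus_complex.sel
    by (simp only:) (rule psd_sesq_form_combination_le[OF psd herm \<rho>])
  then show ?thesis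
    unfolding max_entangled2_partial_bra[OF \<Phi> u] by simp
qed

lemma twice_Re_le_sqrt_mult:
  assumes "0 \<le> \<alpha>" "0 \<le> \<beta>" "\<alpha> \<le> m / 2" "\<beta> \<le> m' / 2" "cmod \<gamma> ^ 2 \<le> \<alpha> * \<beta>"
  shows "2 * Re \<gamma> \<le> sqrt (m * m')"
proof (rule real_le_rsqrt)
  have "(2 * Re \<gamma>)\<^sup>2 = 4 * \<bar>Re \<gamma>\<bar>\<^sup>2" by (simp add: power_mult_distrib)
  also have "\<dots> \<le> 4 * cmod \<gamma> ^ 2"
    using power_mono[OF abs_Re_le_cmod abs_ge_zero, of \<gamma> 2] by simp
  also have "\<dots> \<le> (2 * \<alpha>) * (2 * \<beta>)" using assms(5) by simp
  also have "\<dots> \<le> m * m'" using assms(1-4) by (intro mult_mono) auto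
  finally show "(2 * Re \<gamma>)\<^sup>2 \<le> m * m'" .
qed

lemma expect_le_local_weights:
  assumes psd: "psd_mat \<rho>" and herm: "hermitian_mat \<rho>" and \<rho>: "\<rho> \<in> carrier_mat 4 4"
    and \<Phi>: "max_entangled2 \<Phi>" and u: "cmod u0 ^ 2 + cmod u1 ^ 2 = 1"
  defines "m \<equiv> Re (local_weight \<rho> u0 u1)" and "m' \<equiv> Re (local_weight \<rho> (- cnj u1) (cnj u0))"
  shows "Re (expect \<Phi> \<rho>) \<le> (m + m') / 2 + sqrt (m * m')"
proof -
  have u': "cmod (- cnj u1) ^ 2 + cmod (cnj u0) ^ 2 = 1"
    using u by simp
  define a where "a = partial_proj u0 u1 (($) \<Phi>)"
  define b where "b = partial_proj (- cnj u1) (cnj u0) (($) \<Phi>)"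
  define \<alpha> where "\<alpha> = Re (sesq_form \<rho> a a)"
  define \<beta> where "\<beta> = Re (sesq_form \<rho> b b)"
  define \<gamma> where "\<gamma> = sesq_form \<rho> a b"
  have "expect \<Phi> \<rho> = sesq_form \<rho> (($) \<Phi>) (($) \<Phi>)"
    unfolding expect_def by (rule sesq_form_vec[OF \<rho> max_entangled2_carrier_vec[OF \<Phi>]])
  also have "\<dots> = sesq_form \<rho> (\<lambda>i. 1 * a i + 1 * b i) (\<lambda>i. 1 * a i + 1 * b i)"
    using \<rho> partial_proj_resolution[OF u] unfolding a_def b_def
    by (intro sesq_form_cong) auto
  finally have "Re (expect \<Phi> \<rho>) = \<alpha> + \<beta> + 2 * Re \<gamma>"
    unfolding sesq_form_combination hermitian_sesq_form_swap[OF herm, of b a] \<alpha>_def \<beta>_def \<gamma>_def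
    by simp
  moreover have \<alpha>m: "\<alpha> \<le> m / 2"
    unfolding \<alpha>_def m_def a_def by (rule partial_proj_sesq_form_le[OF psd herm \<rho> \<Phi> u])
  moreover have \<beta>m: "\<beta> \<le> m' / 2"
    unfolding \<beta>_def m'_def b_def by (rule partial_proj_sesq_form_le[OF psd herm \<rho> \<Phi> u'])
  moreover have \<alpha>\<beta>: "0 \<le> \<alpha>" "0 \<le> \<beta>"
    unfolding \<alpha>_def \<beta>_def using psd_sesq_form_nonneg[OF psd \<rho>] by blast+
  moreover have "cmod \<gamma> ^ 2 \<le> \<alpha> * \<beta>"
    unfolding \<alpha>_def \<beta>_def \<gamma>_def by (rule psd_sesq_form_Cauchy_Schwarz[OF psd herm \<rho>])
  then have "2 * Re \<gamma> \<le> sqrt (m * m')"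
    by (rule twice_Re_le_sqrt_mult[OF \<alpha>\<beta> \<alpha>m \<beta>m])
  ultimately show ?thesis unfolding add_divide_distrib by linarith
qed

lemma eigenvalue_unit_eigenvector2:
  assumes "A \<in> carrier_mat 2 2" "eigenvalue A l"
  obtains u0 u1 where "cmod u0 ^ 2 + cmod u1 ^ 2 = 1"
    "A $$ (0, 0) * u0 + A $$ (0, 1) * u1 = l * u0"
    "A $$ (1, 0) * u0 + A $$ (1, 1) * u1 = l * u1"
proof -
  obtain v where v: "v \<in> carrier_vec 2" "v \<noteq> 0\<^sub>v 2" "A *\<^sub>v v = l \<cdot>\<^sub>v v"
    using assms(2) unfolding eigenvalue_def eigenvector_def using assms(1) by auto
  have eq: "A $$ (i, 0) * v$0 + A $$ (i, 1) * v$1 = l * v$i" if "i < 2" for i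
  proof -
    have "(A *\<^sub>v v) $ i = (l \<cdot>\<^sub>v v) $ i" using v(3) by simp
    then show ?thesis
      using that assms(1) v(1)
      by (simp add: scalar_prod_def row_def numeral_eq_Suc atLeast0LessThan lessThan_Suc add.commute)
  qed
  define r where "r = sqrt (cmod (v$0) ^ 2 + cmod (v$1) ^ 2)"
  have nonzero: "v$0 \<noteq> 0 \<or> v$1 \<noteq> 0"
  proof (rule ccontr)
    assume "\<not> (v$0 \<noteq> 0 \<or> v$1 \<noteq> 0)"
    then have "v = 0\<^sub>v 2" using v(1) by (intro eq_vecI) (auto simp: less_2_cases_iff)
    with v(2) show False by simp
  qed
  then have r2: "r\<^sup>2 = cmod (v$0) ^ 2 + cmod (v$1) ^ 2" and "r > 0"
    unfolding r_def by (auto simp: add_pos_nonneg add_nonneg_pos)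
  show thesis
  proof (rule that[of "v$0 / of_real r" "v$1 / of_real r"])
    show "cmod (v$0 / of_real r) ^ 2 + cmod (v$1 / of_real r) ^ 2 = 1"
      using \<open>r > 0\<close> r2 nonzero by (simp add: norm_divide power_divide add_divide_distrib[symmetric])
    show "A $$ (0, 0) * (v$0 / of_real r) + A $$ (0, 1) * (v$1 / of_real r) = l * (v$0 / of_real r)"
      using eq[of 0] by (simp add: add_divide_distrib[symmetric])
    show "A $$ (1, 0) * (v$0 / of_real r) + A $$ (1, 1) * (v$1 / of_real r) = l * (v$1 / of_real r)"
      using eq[of 1] by (simp add: add_divide_distrib[symmetric])
  qed
qed

lemma fidelity_bound_interval:
  fixes c L :: real
  assumes "1 / 2 \<le> c" "c \<le> 1 / 2 + sqrt (L * (1 - L))"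
  shows "L \<in> {(1 - 2 * sqrt (c * (1 - c))) / 2 .. (1 + 2 * sqrt (c * (1 - c))) / 2}"
proof -
  have "0 \<le> sqrt (L * (1 - L))" using assms by linarith
  then have L: "0 \<le> L * (1 - L)" by simp
  have "(c - 1 / 2)\<^sup>2 \<le> (sqrt (L * (1 - L)))\<^sup>2"
    using assms by (intro power_mono) auto
  then have "(L - 1 / 2)\<^sup>2 \<le> c * (1 - c)"
    using L by (simp add: power2_eq_square algebra_simps)
  then have "\<bar>L - 1 / 2\<bar> \<le> sqrt (c * (1 - c))"
    using real_sqrt_le_mono real_sqrt_abs by metis
  then show ?thesis by (simp add: abs_le_iff field_simps)
qed

theorem mainTheorem7:
  fixes \<rho> :: "complex mat" and \<Phi> :: "complex vec" and c :: real
  assumes "density_operator 4 \<rho>"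
    and "max_entangled2 \<Phi>"
    and "1/2 \<le> c" and "c \<le> 1"
    and "Re (expect \<Phi> \<rho>) \<ge> c"
  shows "\<forall>l. eigenvalue (ptrace_B \<rho>) l \<longrightarrow>
     l \<in> complex_of_real ` {(1 - 2 * sqrt (c * (1 - c))) / 2 .. (1 + 2 * sqrt (c * (1 - c))) / 2}"
proof (intro allI impI)
  fix l assume "eigenvalue (ptrace_B \<rho>) l"
  have \<rho>: "\<rho> \<in> carrier_mat 4 4" and herm: "hermitian_mat \<rho>" and psd: "psd_mat \<rho>"
    and tr: "mat_trace \<rho> = 1"
    using assms(1) unfolding density_operator_def by auto
  have "ptrace_B \<rho> \<in> carrier_mat 2 2" unfolding ptrace_B_def by simp
  then obtain u0 u1 where u: "cmod u0 ^ 2 + cmod u1 ^ 2 = 1"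
    and "ptrace_B \<rho> $$ (0, 0) * u0 + ptrace_B \<rho> $$ (0, 1) * u1 = l * u0"
    and "ptrace_B \<rho> $$ (1, 0) * u0 + ptrace_B \<rho> $$ (1, 1) * u1 = l * u1"
    using eigenvalue_unit_eigenvector2 \<open>eigenvalue (ptrace_B \<rho>) l\<close> by blast
  then have "local_weight \<rho> u0 u1 = l * (u0 * cnj u0 + u1 * cnj u1)"
    unfolding local_weight_ptrace_B[OF \<rho>] by (simp add: algebra_simps)
  then have w: "local_weight \<rho> u0 u1 = l"
    using u by (simp add: norm2_sum_eq_iff)
  then have w': "local_weight \<rho> (- cnj u1) (cnj u0) = 1 - l"
    using local_weight_complement[OF \<rho> u] tr by (metis add_diff_cancel_left')
  have "Im l = 0"
    unfolding w[symmetric] local_weight_def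
    using psd_sesq_form_real[OF psd \<rho>] by (metis Im_complex_of_real plus_complex.sel(2) add_0)
  then have "l = of_real (Re l)" by (simp add: complex_eq_iff)
  moreover have "c \<le> 1 / 2 + sqrt (Re l * (1 - Re l))"
    using expect_le_local_weights[OF psd herm \<rho> assms(2) u] assms(5) unfolding w w' by simp
  ultimately show "l \<in> complex_of_real ` {(1 - 2 * sqrt (c * (1 - c))) / 2 .. (1 + 2 * sqrt (c * (1 - c))) / 2}"
    using fidelity_bound_interval[OF assms(3)] by (metis image_eqI)
qed

end
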